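(* Let $G=(V,E)$ be a finite simple graph with directed edge set $\vec E$ (each undirected edge yields two opposite directed edges; $o(e)$, $t(e)$ are origin and terminus, $\bar e$ the reverse edge, $[e]$ the undirected edge). Let $(r_i)_{i\in V}$ be positive integers and $u_e\in\mathbb{C}^{r_{t(e)}\times r_{o(e)}}$ for $e\in\vec E$. Define $$Z_G(\boldsymbol u)=\prod_{\mathfrak p\in\mathfrak P_G}\det(I-\pi(\mathfrak p))^{-1},\qquad \pi(\mathfrak p)=u_{e_k}\cdots u_{e_1}\ \text{for }\mathfrak p=(e_1,\dots,e_k),$$ where $\mathfrak P_G$ is the set of prime cycles. Assume $I-u_eu_{\bar e}$ is invertible for every $e$. Then $$Z_G(\boldsymbol u)^{-1}=\det\big(I+\hat{\mathcal D}(\boldsymbol u)-\hat{\mathcal A}(\boldsymbol u)\big)\prod_{[e]\in E}\det(I-u_eu_{\bar e}),$$ where $\hat{\mathcal D}(\boldsymbol u),\hat{\mathcal A}(\boldsymbol u)$ are the operators on $\bigoplus_{i\in V}\mathbb{C}^{r_i}$ $$(\hat{\mathcal D}(\boldsymbol u)g)(i)=\Big(\sum_{e:t(e)=i}(I_{r_i}-u_eu_{\bar e})^{-1}u_eu_{\bar e}\Big)g(i),\qquad(\hat{\mathcal A}(\boldsymbol u)g)(i)=\sum_{e:t(e)=i}(I_{r_i}-u_eu_{\bar e})^{-1}u_e\,g(o(e)),$$ and the product over $[e]\in E$ takes one directed representative per undirected edge.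
   Context: A closed geodesic in $G$ is a sequence $(e_1,\dots,e_k)$ of directed edges with $t(e_l)=o(e_{l+1})$ and $e_{l+1}\ne\bar e_l$ for all $l\in\mathbb{Z}/k\mathbb{Z}$; it is prime if it is not the $m$-fold repetition ($m\ge2$) of a shorter closed geodesic; a prime cycle is a cyclic-permutation equivalence class of prime closed geodesics. The identity is understood as an identity of formal power series in the entries of the $u_e$ (with $Z_G(\boldsymbol u)^{-1}$ equal to $\det(I-\mathcal M)$, where $\mathcal M$ acts on $\bigoplus_{e}\mathbb{C}^{r_{t(e)}}$ by $(\mathcal Mf)(e)=\sum_{e':t(e')=o(e),\,e'\ne\bar e}u_ef(e')$). *)

theory Defs
  imports "Jordan_Normal_Form.Gauss_Jordan_Elimination" "Jordan_Normal_Form.Determinant"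
    "HOL-Combinatorics.Permutations"
begin

(* Determinant of an operator on a finite-dimensional space with a basis indexed
   by the finite set S (Leibniz formula); A x y is the matrix entry (row x, column y). *)
definition det_on :: "'a set \<Rightarrow> ('a \<Rightarrow> 'a \<Rightarrow> complex) \<Rightarrow> complex" where
  "det_on S A = (\<Sum>p | p permutes S. of_int (sign p) * (\<Prod>x\<in>S. A x (p x)))"

(* Directed edges are pairs e = (o(e), t(e)); reverse edge is prod.swap e. *)

(* basis index of  \<Oplus>_{e} C^{r_{t(e)}} *)
definition edge_index :: "('v \<times> 'v) set \<Rightarrow> ('v \<Rightarrow> nat) \<Rightarrow> (('v \<times> 'v) \<times> nat) set" where
  "edge_index E r = {(e, a). e \<in> E \<and> a < r (snd e)}"

(* basis index of  \<Oplus>_{i\<in>V} C^{r_i} *)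
definition vertex_index :: "'v set \<Rightarrow> ('v \<Rightarrow> nat) \<Rightarrow> ('v \<times> nat) set" where
  "vertex_index V r = {(i, a). i \<in> V \<and> a < r i}"

definition edge_op :: "('v \<times> 'v) set \<Rightarrow> ('v \<times> 'v \<Rightarrow> complex mat)
     \<Rightarrow> ('v \<times> 'v) \<times> nat \<Rightarrow> ('v \<times> 'v) \<times> nat \<Rightarrow> complex" where
  "edge_op E u x y = (case x of (e, a) \<Rightarrow> case y of (e', b) \<Rightarrow>
      if e' \<in> E \<and> snd e' = fst e \<and> e' \<noteq> prod.swap e then u e $$ (a, b) else 0)"

(* Z_G(u)^{-1} := det(I - M), as fixed in the context *)
definition zeta_inv :: "('v \<times> 'v) set \<Rightarrow> ('v \<Rightarrow> nat) \<Rightarrow> ('v \<times> 'v \<Rightarrow> complex mat) \<Rightarrow> complex" where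
  "zeta_inv E r u = det_on (edge_index E r) (\<lambda>x y. (if x = y then 1 else 0) - edge_op E u x y)"

definition Winv :: "('v \<Rightarrow> nat) \<Rightarrow> ('v \<times> 'v \<Rightarrow> complex mat) \<Rightarrow> 'v \<times> 'v \<Rightarrow> complex mat" where
  "Winv r u e = the (mat_inverse (1\<^sub>m (r (snd e)) - u e * u (prod.swap e)))"

definition hatD :: "('v \<times> 'v) set \<Rightarrow> ('v \<Rightarrow> nat) \<Rightarrow> ('v \<times> 'v \<Rightarrow> complex mat)
     \<Rightarrow> 'v \<times> nat \<Rightarrow> 'v \<times> nat \<Rightarrow> complex" where
  "hatD E r u x y = (case x of (i, a) \<Rightarrow> case y of (j, b) \<Rightarrow>
      if i = j then (\<Sum>e\<in>{e\<in>E. snd e = i}. (Winv r u e * u e * u (prod.swap e)) $$ (a, b)) else 0)"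

definition hatA :: "('v \<times> 'v) set \<Rightarrow> ('v \<Rightarrow> nat) \<Rightarrow> ('v \<times> 'v \<Rightarrow> complex mat)
     \<Rightarrow> 'v \<times> nat \<Rightarrow> 'v \<times> nat \<Rightarrow> complex" where
  "hatA E r u x y = (case x of (i, a) \<Rightarrow> case y of (j, b) \<Rightarrow>
      (\<Sum>e\<in>{e\<in>E. snd e = i \<and> fst e = j}. (Winv r u e * u e) $$ (a, b)))"

end

theory Submission
  imports Defs
begin

(* The operator I - M factors as (I + J) - S T, where J = rev_op is the backtracking part
   (J f)(e) = u_e f(rev e), S = origin_op is (S g)(e) = u_e g(o(e)), and T = terminus_op is
   (T f)(i) = sum of f(e) over t(e) = i.  I + J is block diagonal over the pairs {e, rev e},
   with blocks [[I, u_e], [u_(rev e), I]] of determinant det(I - u_e u_(rev e)), and its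
   inverse rev_resolvent has the blocks (I - u_e u_(rev e))^-1 and -(I - u_e u_(rev e))^-1 u_e.
   The Schur complement formula det(P - S T) = det P * det(I - T P^-1 S) then gives the claim,
   because T (I + J)^-1 S = hatA - hatD. *)

lemma index_mult_mat_sum:
  assumes "A \<in> carrier_mat n k" "B \<in> carrier_mat k m" "a < n" "b < m"
  shows "(A * B) $$ (a, b) = (\<Sum>c<k. A $$ (a, c) * B $$ (c, b))"
  using assms by (simp add: scalar_prod_def atLeast0LessThan)

lemma sum_mult_delta:
  fixes f :: "'a \<Rightarrow> 'b :: semiring_1"
  assumes "finite S" "w \<in> S"
  shows "(\<Sum>z\<in>S. f z * (if z = w then 1 else 0)) = f w"
proof -
  have "(\<Sum>z\<in>S. f z * (if z = w then 1 else 0)) = (\<Sum>z\<in>S. if z = w then f z else 0)"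
    by (intro sum.cong) auto
  then show ?thesis
    using assms by simp
qed

lemma mat_inverse_left_inverse:
  fixes A :: "'a :: field mat"
  assumes A: "A \<in> carrier_mat n n" and inv: "invertible_mat A"
  shows "the (mat_inverse A) * A = 1\<^sub>m n" and "the (mat_inverse A) \<in> carrier_mat n n"
proof -
  obtain B where B: "A * B = 1\<^sub>m (dim_row A)" "B * A = 1\<^sub>m (dim_row B)"
    using inv unfolding invertible_mat_def inverts_mat_def by blast
  then have "B \<in> carrier_mat n n"
    using A by (metis carrier_matD carrier_matI index_mult_mat(2,3) index_one_mat(2,3))
  then have "A \<in> Units (ring_mat TYPE('a) n ())"
    using A B unfolding Units_def ring_mat_def by auto
  then obtain C where "mat_inverse A = Some C"
    using mat_inverse(1)[OF A] by fastforce
  then show "the (mat_inverse A) * A = 1\<^sub>m n" and "the (mat_inverse A) \<in> carrier_mat n n"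
    using mat_inverse(2)[OF A] by auto
qed

lemma det_four_block_one_diag:
  fixes A :: "'a :: idom mat"
  assumes A: "A \<in> carrier_mat n m" and B: "B \<in> carrier_mat m n"
  shows "det (four_block_mat (1\<^sub>m n) A B (1\<^sub>m m)) = det (1\<^sub>m n - A * B)"
    and "det (four_block_mat (1\<^sub>m n) A B (1\<^sub>m m)) = det (1\<^sub>m m - B * A)"
proof -
  let ?M = "four_block_mat (1\<^sub>m n) A B (1\<^sub>m m)"
  let ?L = "four_block_mat (1\<^sub>m n) (0\<^sub>m n m) (- B) (1\<^sub>m m)"
  let ?U = "four_block_mat (1\<^sub>m n) (- A) (0\<^sub>m m n) (1\<^sub>m m)"
  have M: "?M \<in> carrier_mat (n + m) (n + m)" and L: "?L \<in> carrier_mat (n + m) (n + m)"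
    and U: "?U \<in> carrier_mat (n + m) (n + m)"
    using A B by auto
  have det_L: "det ?L = 1"
    using B by (subst det_four_block_mat_upper_right_zero[of _ n _ m]) auto
  have det_U: "det ?U = 1"
    using A by (subst det_four_block_mat_lower_left_zero[of _ n _ m]) auto
  have "det ?M = det (?M * ?L)"
    using det_mult[OF M L] det_L by simp
  also have "?M * ?L = four_block_mat (1\<^sub>m n - A * B) A (0\<^sub>m m n) (1\<^sub>m m)"
    using A B by (subst mult_four_block_mat[of _ n n _ m _ m]) (auto intro!: cong_four_block_mat eq_matI)
  also have "det \<dots> = det (1\<^sub>m n - A * B)"
    using A B by (subst det_four_block_mat_lower_left_zero[of _ n _ m]) auto
  finally show "det ?M = det (1\<^sub>m n - A * B)" .
  have "det ?M = det (?M * ?U)"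
    using det_mult[OF M U] det_U by simp
  also have "?M * ?U = four_block_mat (1\<^sub>m n) (0\<^sub>m n m) B (1\<^sub>m m - B * A)"
    using A B by (subst mult_four_block_mat[of _ n n _ m _ m]) (auto intro!: cong_four_block_mat eq_matI)
  also have "det \<dots> = det (1\<^sub>m m - B * A)"
    using A B by (subst det_four_block_mat_upper_right_zero[of _ n _ m]) auto
  finally show "det ?M = det (1\<^sub>m m - B * A)" .
qed

lemma det_on_cong:
  assumes "\<And>x y. x \<in> S \<Longrightarrow> y \<in> S \<Longrightarrow> M x y = N x y"
  shows "det_on S M = det_on S N"
  unfolding det_on_def using assms by (auto intro!: sum.cong prod.cong simp: permutes_in_image)

lemma det_on_reindex:
  assumes f: "bij_betw f A B" and fin: "finite A"
  shows "det_on B M = det_on A (\<lambda>x y. M (f x) (f y))"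
proof -
  let ?g = "\<lambda>p x. if x \<in> B then f (p (inv_into A f x)) else x"
  have bij: "bij_betw ?g {p. p permutes A} {p. p permutes B}"
    by (rule bij_betw_permutations[OF f])
  have "det_on B M = (\<Sum>p | p permutes A. of_int (sign (?g p)) * (\<Prod>y\<in>B. M y (?g p y)))"
    unfolding det_on_def by (rule sum.reindex_bij_betw[OF bij, symmetric])
  also have "\<dots> = det_on A (\<lambda>x y. M (f x) (f y))"
    unfolding det_on_def
  proof (rule sum.cong[OF refl])
    fix p assume p: "p \<in> {p. p permutes A}"
    have "permutes_bij_finite p A B f (inv_into A f)"
      by unfold_locales (use p f fin in \<open>auto simp: bij_betw_def\<close>)
    then have "sign (?g p) = sign p"
      by (rule permutes_bij_finite.sign_p')
    moreover have "(\<Prod>y\<in>B. M y (?g p y)) = (\<Prod>x\<in>A. M (f x) (f (p x)))"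
      using p f by (subst prod.reindex_bij_betw[OF f, symmetric])
        (auto intro!: prod.cong simp: bij_betw_def permutes_in_image)
    ultimately show "of_int (sign (?g p)) * (\<Prod>y\<in>B. M y (?g p y))
        = of_int (sign p) * (\<Prod>x\<in>A. M (f x) (f (p x)))"
      by simp
  qed
  finally show ?thesis .
qed

lemma det_on_eq_det:
  assumes "bij_betw h {0..<n} S"
  shows "det_on S M = det (mat n n (\<lambda>(i, j). M (h i) (h j)))"
proof -
  have "det_on {0..<n} N = det (mat n n (\<lambda>(i, j). N i j))" for N
    unfolding det_on_def det_def
    by (auto intro!: sum.cong prod.cong simp: permutes_in_image sign_def)
  then show ?thesis
    using det_on_reindex[OF assms] by simp
qed

lemma det_on_one:
  assumes "finite S"
  shows "det_on S (\<lambda>x y. if x = y then 1 else 0) = 1"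
proof -
  obtain h where h: "bij_betw h {0..<card S} S"
    using ex_bij_betw_nat_finite[OF assms] by blast
  have "mat (card S) (card S) (\<lambda>(i, j). if h i = h j then 1 else 0) = (1\<^sub>m (card S) :: complex mat)"
    using inj_on_eq_iff[OF bij_betw_imp_inj_on[OF h]] by (intro eq_matI) auto
  then show ?thesis
    by (simp add: det_on_eq_det[OF h])
qed

lemma det_on_mult:
  assumes "finite S"
  shows "det_on S (\<lambda>x y. \<Sum>z\<in>S. A x z * B z y) = det_on S A * det_on S B"
proof -
  obtain h where h: "bij_betw h {0..<card S} S"
    using ex_bij_betw_nat_finite[OF assms] by blast
  let ?n = "card S"
  let ?A = "mat ?n ?n (\<lambda>(i, j). A (h i) (h j))"
  let ?B = "mat ?n ?n (\<lambda>(i, j). B (h i) (h j))"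
  have "mat ?n ?n (\<lambda>(i, j). \<Sum>z\<in>S. A (h i) z * B z (h j)) = ?A * ?B"
    by (intro eq_matI) (auto simp: scalar_prod_def sum.reindex_bij_betw[OF h, symmetric])
  then show ?thesis
    using det_mult[of ?A ?n ?B] by (simp add: det_on_eq_det[OF h])
qed

lemma det_on_Un_eq_det_four_block:
  assumes h1: "bij_betw h1 {0..<n1} S1" and h2: "bij_betw h2 {0..<n2} S2"
    and disjoint: "S1 \<inter> S2 = {}"
  shows "det_on (S1 \<union> S2) M = det (four_block_mat
      (mat n1 n1 (\<lambda>(i, j). M (h1 i) (h1 j))) (mat n1 n2 (\<lambda>(i, j). M (h1 i) (h2 j)))
      (mat n2 n1 (\<lambda>(i, j). M (h2 i) (h1 j))) (mat n2 n2 (\<lambda>(i, j). M (h2 i) (h2 j))))"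
proof -
  define h where "h i = (if i < n1 then h1 i else h2 (i - n1))" for i
  have "bij_betw h {0..<n1} S1"
    using h1 by (rule bij_betw_cong[THEN iffD1, rotated]) (auto simp: h_def)
  moreover have "bij_betw h {n1..<n1 + n2} S2"
  proof -
    have "bij_betw (\<lambda>i. i - n1) {n1..<n1 + n2} {0..<n2}"
      by (rule bij_betw_byWitness[where f' = "\<lambda>i. i + n1"]) auto
    from bij_betw_trans[OF this h2] show ?thesis
      by (rule bij_betw_cong[THEN iffD1, rotated]) (auto simp: h_def)
  qed
  ultimately have "bij_betw h ({0..<n1} \<union> {n1..<n1 + n2}) (S1 \<union> S2)"
    using disjoint by (rule bij_betw_combine)
  then have h: "bij_betw h {0..<n1 + n2} (S1 \<union> S2)"
    by (simp add: ivl_disj_un_two(3))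
  show ?thesis
    unfolding det_on_eq_det[OF h] by (intro arg_cong[where f = det] eq_matI) (auto simp: h_def)
qed

lemma det_on_Un_block_triangular:
  assumes "finite S1" "finite S2" "S1 \<inter> S2 = {}"
    and zero: "\<And>x y. x \<in> S1 \<Longrightarrow> y \<in> S2 \<Longrightarrow> M x y = 0"
  shows "det_on (S1 \<union> S2) M = det_on S1 M * det_on S2 M"
proof -
  obtain h1 where h1: "bij_betw h1 {0..<card S1} S1"
    using ex_bij_betw_nat_finite[OF assms(1)] by blast
  obtain h2 where h2: "bij_betw h2 {0..<card S2} S2"
    using ex_bij_betw_nat_finite[OF assms(2)] by blast
  have "mat (card S1) (card S2) (\<lambda>(i, j). M (h1 i) (h2 j)) = 0\<^sub>m (card S1) (card S2)"
    using bij_betwE[OF h1] bij_betwE[OF h2] by (intro eq_matI) (auto intro!: zero)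
  then show ?thesis
    unfolding det_on_Un_eq_det_four_block[OF h1 h2 assms(3)] det_on_eq_det[OF h1] det_on_eq_det[OF h2]
    by (intro det_four_block_mat_upper_right_zero) auto
qed

lemma det_on_UN_block_diagonal:
  assumes "finite I" "\<And>i. i \<in> I \<Longrightarrow> finite (B i)"
    and "\<And>i j. i \<in> I \<Longrightarrow> j \<in> I \<Longrightarrow> i \<noteq> j \<Longrightarrow> B i \<inter> B j = {}"
    and "\<And>i j x y. i \<in> I \<Longrightarrow> j \<in> I \<Longrightarrow> i \<noteq> j \<Longrightarrow> x \<in> B i \<Longrightarrow> y \<in> B j \<Longrightarrow> M x y = 0"
  shows "det_on (\<Union>i\<in>I. B i) M = (\<Prod>i\<in>I. det_on (B i) M)"
  using assms
proof (induction I rule: finite_induct)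
  case empty
  then show ?case by (simp add: det_on_def permutes_empty)
next
  case (insert i I)
  have "det_on (\<Union>k\<in>insert i I. B k) M = det_on (B i \<union> (\<Union>k\<in>I. B k)) M"
    by simp
  also have "\<dots> = det_on (B i) M * det_on (\<Union>k\<in>I. B k) M"
    by (rule det_on_Un_block_triangular) (use insert in \<open>auto intro: insert.prems(3)\<close>)
  also have "det_on (\<Union>k\<in>I. B k) M = (\<Prod>k\<in>I. det_on (B k) M)"
    by (rule insert.IH; meson insert.prems insertCI)
  finally show ?case
    using insert.hyps by simp
qed

lemma det_on_one_minus_mult_commute:
  assumes S: "finite S" and R: "finite R"
  shows "det_on S (\<lambda>x y. (if x = y then 1 else 0) - (\<Sum>z\<in>R. A x z * B z y))
       = det_on R (\<lambda>x y. (if x = y then 1 else 0) - (\<Sum>z\<in>S. B x z * A z y))"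
proof -
  obtain h where h: "bij_betw h {0..<card S} S"
    using ex_bij_betw_nat_finite[OF S] by blast
  obtain g where g: "bij_betw g {0..<card R} R"
    using ex_bij_betw_nat_finite[OF R] by blast
  let ?n = "card S" and ?m = "card R"
  let ?A = "mat ?n ?m (\<lambda>(i, j). A (h i) (g j))"
  let ?B = "mat ?m ?n (\<lambda>(i, j). B (g i) (h j))"
  have "mat ?n ?n (\<lambda>(i, j). (if h i = h j then 1 else 0) - (\<Sum>z\<in>R. A (h i) z * B z (h j)))
      = 1\<^sub>m ?n - ?A * ?B"
    using inj_on_eq_iff[OF bij_betw_imp_inj_on[OF h]]
    by (intro eq_matI) (auto simp: scalar_prod_def sum.reindex_bij_betw[OF g, symmetric])
  moreover have "mat ?m ?m (\<lambda>(i, j). (if g i = g j then 1 else 0) - (\<Sum>z\<in>S. B (g i) z * A z (g j)))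
      = 1\<^sub>m ?m - ?B * ?A"
    using inj_on_eq_iff[OF bij_betw_imp_inj_on[OF g]]
    by (intro eq_matI) (auto simp: scalar_prod_def sum.reindex_bij_betw[OF h, symmetric])
  moreover have "det (1\<^sub>m ?n - ?A * ?B) = det (1\<^sub>m ?m - ?B * ?A)"
    using det_four_block_one_diag[of ?A ?n ?m ?B] by simp
  ultimately show ?thesis
    by (simp add: det_on_eq_det[OF h] det_on_eq_det[OF g])
qed

lemma det_on_schur_complement:
  assumes S: "finite S" and R: "finite R"
    and left_inverse: "\<And>x y. x \<in> S \<Longrightarrow> y \<in> S \<Longrightarrow> (\<Sum>z\<in>S. Q x z * P z y) = (if x = y then 1 else 0)"
  shows "det_on S (\<lambda>x y. P x y - (\<Sum>w\<in>R. A x w * B w y))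
       = det_on S P * det_on R (\<lambda>x y. (if x = y then 1 else 0) - (\<Sum>z\<in>S. B x z * (\<Sum>w\<in>S. Q z w * A w y)))"
proof -
  let ?QA = "\<lambda>x w. \<Sum>z\<in>S. Q x z * A z w"
  have "det_on S Q * det_on S P = det_on S (\<lambda>x y. \<Sum>z\<in>S. Q x z * P z y)"
    by (rule det_on_mult[OF S, symmetric])
  also have "\<dots> = det_on S (\<lambda>x y. if x = y then 1 else 0)"
    using left_inverse by (rule det_on_cong)
  finally have QP: "det_on S Q * det_on S P = 1"
    by (simp add: det_on_one[OF S])
  have "det_on S Q * det_on S (\<lambda>x y. P x y - (\<Sum>w\<in>R. A x w * B w y))
      = det_on S (\<lambda>x y. \<Sum>z\<in>S. Q x z * (P z y - (\<Sum>w\<in>R. A z w * B w y)))"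
    by (rule det_on_mult[OF S, symmetric])
  also have "\<dots> = det_on S (\<lambda>x y. (if x = y then 1 else 0) - (\<Sum>w\<in>R. ?QA x w * B w y))"
  proof (rule det_on_cong)
    fix x y assume "x \<in> S" "y \<in> S"
    have "(\<Sum>z\<in>S. Q x z * (\<Sum>w\<in>R. A z w * B w y)) = (\<Sum>w\<in>R. ?QA x w * B w y)"
      by (simp add: sum_distrib_left sum_distrib_right mult.assoc) (rule sum.swap)
    then show "(\<Sum>z\<in>S. Q x z * (P z y - (\<Sum>w\<in>R. A z w * B w y)))
        = (if x = y then 1 else 0) - (\<Sum>w\<in>R. ?QA x w * B w y)"
      using left_inverse[OF \<open>x \<in> S\<close> \<open>y \<in> S\<close>] by (simp add: right_diff_distrib sum_subtractf)
  qed
  also have "\<dots> = det_on R (\<lambda>x y. (if x = y then 1 else 0) - (\<Sum>z\<in>S. B x z * ?QA z y))"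
    by (rule det_on_one_minus_mult_commute[OF S R])
  finally have QD: "det_on S Q * det_on S (\<lambda>x y. P x y - (\<Sum>w\<in>R. A x w * B w y))
      = det_on R (\<lambda>x y. (if x = y then 1 else 0) - (\<Sum>z\<in>S. B x z * ?QA z y))" .
  have "det_on S (\<lambda>x y. P x y - (\<Sum>w\<in>R. A x w * B w y))
      = (det_on S Q * det_on S P) * det_on S (\<lambda>x y. P x y - (\<Sum>w\<in>R. A x w * B w y))"
    using QP by simp
  also have "\<dots> = det_on S P * (det_on S Q * det_on S (\<lambda>x y. P x y - (\<Sum>w\<in>R. A x w * B w y)))"
    by (simp only: ac_simps)
  finally show ?thesis
    unfolding QD .
qed

fun rev_op :: "('v \<times> 'v \<Rightarrow> complex mat) \<Rightarrow> ('v \<times> 'v) \<times> nat \<Rightarrow> ('v \<times> 'v) \<times> nat \<Rightarrow> complex" where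
  "rev_op u (e, a) (e', b) = (if e' = prod.swap e then u e $$ (a, b) else 0)"

fun origin_op :: "('v \<times> 'v \<Rightarrow> complex mat) \<Rightarrow> ('v \<times> 'v) \<times> nat \<Rightarrow> 'v \<times> nat \<Rightarrow> complex" where
  "origin_op u (e, a) (j, b) = (if j = fst e then u e $$ (a, b) else 0)"

fun terminus_op :: "'v \<times> nat \<Rightarrow> ('v \<times> 'v) \<times> nat \<Rightarrow> complex" where
  "terminus_op (i, a) (e, b) = (if snd e = i \<and> a = b then 1 else 0)"

fun rev_resolvent :: "('v \<Rightarrow> nat) \<Rightarrow> ('v \<times> 'v \<Rightarrow> complex mat)
    \<Rightarrow> ('v \<times> 'v) \<times> nat \<Rightarrow> ('v \<times> 'v) \<times> nat \<Rightarrow> complex" where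
  "rev_resolvent r u (e, a) (e', b) =
     (if e' = e then Winv r u e $$ (a, b)
      else if e' = prod.swap e then - (Winv r u e * u e) $$ (a, b) else 0)"

locale matrix_weighted_graph =
  fixes V :: "'v set" and E :: "('v \<times> 'v) set" and r :: "'v \<Rightarrow> nat"
    and u :: "'v \<times> 'v \<Rightarrow> complex mat"
  assumes finite_V: "finite V"
    and E_subset: "E \<subseteq> V \<times> V"
    and E_sym: "\<And>i j. (i, j) \<in> E \<Longrightarrow> (j, i) \<in> E"
    and no_loops: "\<And>i. (i, i) \<notin> E"
    and u_carrier: "\<And>e. e \<in> E \<Longrightarrow> u e \<in> carrier_mat (r (snd e)) (r (fst e))"
    and invertible: "\<And>e. e \<in> E \<Longrightarrow> invertible_mat (1\<^sub>m (r (snd e)) - u e * u (prod.swap e))"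
begin

abbreviation "EI \<equiv> edge_index E r"
abbreviation "VI \<equiv> vertex_index V r"

lemma finite_E: "finite E"
  using finite_V E_subset finite_subset by blast

lemma swap_in_E: "e \<in> E \<Longrightarrow> prod.swap e \<in> E"
  using E_sym by (cases e) auto

lemma swap_neq: "e \<in> E \<Longrightarrow> prod.swap e \<noteq> e"
  using no_loops by (cases e) auto

lemma u_swap_carrier: "e \<in> E \<Longrightarrow> u (prod.swap e) \<in> carrier_mat (r (fst e)) (r (snd e))"
  using u_carrier[OF swap_in_E] by simp

lemma Winv_left_inverse:
  assumes e: "e \<in> E"
  shows "Winv r u e * (1\<^sub>m (r (snd e)) - u e * u (prod.swap e)) = 1\<^sub>m (r (snd e))"
    and Winv_carrier: "Winv r u e \<in> carrier_mat (r (snd e)) (r (snd e))"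
proof -
  have "1\<^sub>m (r (snd e)) - u e * u (prod.swap e) \<in> carrier_mat (r (snd e)) (r (snd e))"
    using u_carrier[OF e] u_swap_carrier[OF e] by (intro minus_carrier_mat mult_carrier_mat) auto
  then show "Winv r u e * (1\<^sub>m (r (snd e)) - u e * u (prod.swap e)) = 1\<^sub>m (r (snd e))"
    and "Winv r u e \<in> carrier_mat (r (snd e)) (r (snd e))"
    unfolding Winv_def using invertible[OF e] by (rule mat_inverse_left_inverse)+
qed

lemma Winv_diff:
  assumes e: "e \<in> E"
  shows "Winv r u e - Winv r u e * u e * u (prod.swap e) = 1\<^sub>m (r (snd e))"
proof -
  note W = Winv_carrier[OF e] and U = u_carrier[OF e] and U' = u_swap_carrier[OF e]
  have "Winv r u e * (1\<^sub>m (r (snd e)) - u e * u (prod.swap e))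
      = Winv r u e * 1\<^sub>m (r (snd e)) - Winv r u e * (u e * u (prod.swap e))"
    using U U' by (intro mult_minus_distrib_mat[OF W]) auto
  also have "\<dots> = Winv r u e - Winv r u e * u e * u (prod.swap e)"
    by (simp only: right_mult_one_mat[OF W] assoc_mult_mat[OF W U U'])
  finally show ?thesis
    using Winv_left_inverse[OF e] by simp
qed

lemma finite_EI: "finite EI"
  and sum_edge_index: "(\<Sum>z\<in>EI. f z) = (\<Sum>e\<in>E. \<Sum>c<r (snd e). f (e, c))"
proof -
  have EI: "EI = Sigma E (\<lambda>e. {..<r (snd e)})"
    unfolding edge_index_def by auto
  show "finite EI"
    unfolding EI using finite_E by auto
  show "(\<Sum>z\<in>EI. f z) = (\<Sum>e\<in>E. \<Sum>c<r (snd e). f (e, c))"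
    unfolding EI using finite_E by (subst sum.Sigma) auto
qed

lemma finite_VI: "finite VI"
proof -
  have "VI = Sigma V (\<lambda>i. {..<r i})"
    unfolding vertex_index_def by auto
  then show ?thesis
    using finite_V by auto
qed

lemma one_minus_edge_op_eq:
  assumes "x \<in> EI" "y \<in> EI"
  shows "(if x = y then 1 else 0) - edge_op E u x y
    = ((if x = y then 1 else 0) + rev_op u x y) - (\<Sum>z\<in>VI. origin_op u x z * terminus_op z y)"
proof -
  obtain e a where x: "x = (e, a)"
    by fastforce
  obtain e' b where y: "y = (e', b)" "e' \<in> E" "b < r (snd e')"
    using assms(2) unfolding edge_index_def by auto
  have "terminus_op z y = (if z = (snd e', b) then 1 else 0)" for z
    by (cases z) (auto simp: y)
  then have "(\<Sum>z\<in>VI. origin_op u x z * terminus_op z y)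
      = (\<Sum>z\<in>VI. origin_op u x z * (if z = (snd e', b) then 1 else 0))"
    by simp
  also have "\<dots> = origin_op u x (snd e', b)"
    by (rule sum_mult_delta[OF finite_VI]) (use y E_subset in \<open>auto simp: vertex_index_def\<close>)
  finally show ?thesis
    using y by (auto simp: x edge_op_def)
qed

lemma sum_rev_resolvent:
  assumes e: "e \<in> E"
  shows "(\<Sum>z\<in>EI. rev_resolvent r u (e, a) z * f z)
    = (\<Sum>c<r (snd e). Winv r u e $$ (a, c) * f (e, c))
      - (\<Sum>c<r (fst e). (Winv r u e * u e) $$ (a, c) * f (prod.swap e, c))"
proof -
  have "(\<Sum>z\<in>EI. rev_resolvent r u (e, a) z * f z)
      = (\<Sum>e'\<in>E. (if e' = e then \<Sum>c<r (snd e). Winv r u e $$ (a, c) * f (e, c) else 0)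
          + (if e' = prod.swap e
             then - (\<Sum>c<r (fst e). (Winv r u e * u e) $$ (a, c) * f (prod.swap e, c)) else 0))"
    unfolding sum_edge_index using swap_neq[OF e]
    by (intro sum.cong) (auto simp: sum_negf)
  also have "\<dots> = (\<Sum>c<r (snd e). Winv r u e $$ (a, c) * f (e, c))
      - (\<Sum>c<r (fst e). (Winv r u e * u e) $$ (a, c) * f (prod.swap e, c))"
    using e swap_in_E[OF e] finite_E by (simp add: sum.distrib)
  finally show ?thesis .
qed

lemma rev_resolvent_left_inverse:
  assumes "x \<in> EI" "y \<in> EI"
  shows "(\<Sum>z\<in>EI. rev_resolvent r u x z * ((if z = y then 1 else 0) + rev_op u z y))
    = (if x = y then 1 else 0)"
proof -
  obtain e a where x: "x = (e, a)" "e \<in> E" "a < r (snd e)"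
    using assms(1) unfolding edge_index_def by auto
  obtain e' b where y: "y = (e', b)" "b < r (snd e')"
    using assms(2) unfolding edge_index_def by auto
  let ?W = "Winv r u e"
  note carriers = Winv_carrier[OF x(2)] u_carrier[OF x(2)] u_swap_carrier[OF x(2)]
  note sum = sum_rev_resolvent[OF x(2)]
  have ne: "prod.swap e \<noteq> e"
    using swap_neq[OF x(2)] .
  consider "e' = e" | "e' = prod.swap e" | "e' \<noteq> e" "e' \<noteq> prod.swap e"
    by blast
  then show ?thesis
  proof cases
    case 1
    have "(?W * u e * u (prod.swap e)) $$ (a, b)
        = (\<Sum>c<r (fst e). (?W * u e) $$ (a, c) * u (prod.swap e) $$ (c, b))"
      by (rule index_mult_mat_sum) (use carriers x y 1 in auto)
    then have "(\<Sum>z\<in>EI. rev_resolvent r u x z * ((if z = y then 1 else 0) + rev_op u z y))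
        = ?W $$ (a, b) - (?W * u e * u (prod.swap e)) $$ (a, b)"
      using x y 1 ne by (simp add: sum sum_mult_delta)
    also have "\<dots> = (?W - ?W * u e * u (prod.swap e)) $$ (a, b)"
      using carriers x y 1 by simp
    finally show ?thesis
      using Winv_diff[OF x(2)] x y 1 by simp
  next
    case 2
    have "(?W * u e) $$ (a, b) = (\<Sum>c<r (snd e). ?W $$ (a, c) * u e $$ (c, b))"
      by (rule index_mult_mat_sum) (use carriers x y 2 in auto)
    then show ?thesis
      using x y 2 ne by (simp add: sum sum_mult_delta)
  next
    case 3
    then show ?thesis
      using x y by (simp add: sum)
  qed
qed

lemma rev_resolvent_origin_op:
  assumes e: "e \<in> E" and a: "a < r (snd e)" and b: "b < r j"
  shows "(\<Sum>z\<in>EI. rev_resolvent r u (e, a) z * origin_op u z (j, b))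
    = (if j = fst e then (Winv r u e * u e) $$ (a, b) else 0)
      - (if j = snd e then (Winv r u e * u e * u (prod.swap e)) $$ (a, b) else 0)"
proof -
  note W = Winv_carrier[OF e] and U = u_carrier[OF e] and U' = u_swap_carrier[OF e]
  have "(\<Sum>c<r (snd e). Winv r u e $$ (a, c) * origin_op u (e, c) (j, b))
      = (if j = fst e then (Winv r u e * u e) $$ (a, b) else 0)"
    using index_mult_mat_sum[OF W U a, of b] b by auto
  moreover have "(\<Sum>c<r (fst e). (Winv r u e * u e) $$ (a, c) * origin_op u (prod.swap e, c) (j, b))
      = (if j = snd e then (Winv r u e * u e * u (prod.swap e)) $$ (a, b) else 0)"
    using index_mult_mat_sum[OF mult_carrier_mat[OF W U] U' a, of b] b by auto
  ultimately show ?thesis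
    by (simp add: sum_rev_resolvent[OF e])
qed

lemma sum_terminus_op:
  assumes "a < r i"
  shows "(\<Sum>z\<in>EI. terminus_op (i, a) z * f z) = (\<Sum>e\<in>{e \<in> E. snd e = i}. f (e, a))"
proof -
  have "(\<Sum>c<r (snd e). terminus_op (i, a) (e, c) * f (e, c)) = (if snd e = i then f (e, a) else 0)" for e
    using assms by (auto simp: if_distrib[of "\<lambda>t. t * _"] cong: if_cong)
  then show ?thesis
    by (simp add: sum_edge_index sum.inter_filter[OF finite_E])
qed

lemma terminus_resolvent_origin:
  assumes x: "x \<in> VI" and y: "y \<in> VI"
  shows "(\<Sum>z\<in>EI. terminus_op x z * (\<Sum>w\<in>EI. rev_resolvent r u z w * origin_op u w y))
    = hatA E r u x y - hatD E r u x y"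
proof -
  obtain i a where x: "x = (i, a)" "a < r i"
    using x unfolding vertex_index_def by auto
  obtain j b where y: "y = (j, b)" "b < r j"
    using y unfolding vertex_index_def by auto
  have "(\<Sum>z\<in>EI. terminus_op x z * (\<Sum>w\<in>EI. rev_resolvent r u z w * origin_op u w y))
      = (\<Sum>e\<in>{e \<in> E. snd e = i}. (if fst e = j then (Winv r u e * u e) $$ (a, b) else 0)
          - (if i = j then (Winv r u e * u e * u (prod.swap e)) $$ (a, b) else 0))"
    unfolding x y sum_terminus_op[OF x(2)] using x y
    by (intro sum.cong) (auto simp: rev_resolvent_origin_op)
  also have "\<dots> = (\<Sum>e\<in>{e \<in> E. snd e = i}. if fst e = j then (Winv r u e * u e) $$ (a, b) else 0)
      - (\<Sum>e\<in>{e \<in> E. snd e = i}. if i = j then (Winv r u e * u e * u (prod.swap e)) $$ (a, b) else 0)"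
    by (rule sum_subtractf)
  also have "(\<Sum>e\<in>{e \<in> E. snd e = i}. if fst e = j then (Winv r u e * u e) $$ (a, b) else 0)
      = hatA E r u x y"
    unfolding hatA_def x y using finite_E by (simp add: sum.inter_filter if_if_eq_conj)
  also have "(\<Sum>e\<in>{e \<in> E. snd e = i}. if i = j then (Winv r u e * u e * u (prod.swap e)) $$ (a, b) else 0)
      = hatD E r u x y"
    unfolding hatD_def x y by (cases "i = j") simp_all
  finally show ?thesis .
qed

lemma det_on_rev_pair:
  assumes e: "e \<in> E"
  shows "det_on ({e} \<times> {..<r (snd e)} \<union> {prod.swap e} \<times> {..<r (fst e)})
      (\<lambda>x y. (if x = y then 1 else 0) + rev_op u x y)
    = det (1\<^sub>m (r (snd e)) - u e * u (prod.swap e))"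
proof -
  let ?P = "\<lambda>x y. (if x = y then 1 else 0) + rev_op u x y"
  have bij: "bij_betw (Pair f) {0..<r (snd f)} ({f} \<times> {..<r (snd f)})" for f :: "'v \<times> 'v"
    by (auto simp: bij_betw_def inj_on_def)
  have "det_on ({e} \<times> {..<r (snd e)} \<union> {prod.swap e} \<times> {..<r (fst e)}) ?P
      = det (four_block_mat (1\<^sub>m (r (snd e))) (u e) (u (prod.swap e)) (1\<^sub>m (r (fst e))))"
    using swap_neq[OF e] u_carrier[OF e] u_swap_carrier[OF e]
    by (subst det_on_Un_eq_det_four_block[OF bij bij[of "prod.swap e", simplified]])
      (auto intro!: arg_cong[where f = det] cong_four_block_mat eq_matI)
  also have "\<dots> = det (1\<^sub>m (r (snd e)) - u e * u (prod.swap e))"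
    using u_carrier[OF e] u_swap_carrier[OF e] by (rule det_four_block_one_diag(1))
  finally show ?thesis .
qed

lemma det_one_plus_rev_op:
  assumes Or: "Or \<subseteq> E" and orientation: "\<And>e. e \<in> E \<Longrightarrow> e \<in> Or \<longleftrightarrow> prod.swap e \<notin> Or"
  shows "det_on EI (\<lambda>x y. (if x = y then 1 else 0) + rev_op u x y)
    = (\<Prod>e\<in>Or. det (1\<^sub>m (r (snd e)) - u e * u (prod.swap e)))"
proof -
  let ?P = "\<lambda>x y. (if x = y then 1 else 0) + rev_op u x y"
  let ?pair = "\<lambda>e. {e} \<times> {..<r (snd e)} \<union> {prod.swap e} \<times> {..<r (fst e)}"
  have "EI = (\<Union>e\<in>Or. ?pair e)"
  proof
    show "EI \<subseteq> (\<Union>e\<in>Or. ?pair e)"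
      using orientation unfolding edge_index_def by force
    show "(\<Union>e\<in>Or. ?pair e) \<subseteq> EI"
      using Or swap_in_E unfolding edge_index_def by auto
  qed
  also have "det_on (\<Union>e\<in>Or. ?pair e) ?P = (\<Prod>e\<in>Or. det_on (?pair e) ?P)"
  proof (rule det_on_UN_block_diagonal)
    show "finite Or"
      using Or finite_E finite_subset by blast
    fix e e' assume "e \<in> Or" "e' \<in> Or" "e \<noteq> e'"
    then have distinct: "e' \<noteq> prod.swap e" "prod.swap e' \<noteq> e" "prod.swap e' \<noteq> prod.swap e"
      using Or orientation[of e] orientation[of e'] by (metis subsetD swap_swap)+
    with \<open>e \<noteq> e'\<close> show "?pair e \<inter> ?pair e' = {}"
      by auto
    show "?P x y = 0" if "x \<in> ?pair e" "y \<in> ?pair e'" for x y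
      using that \<open>e \<noteq> e'\<close> distinct by auto
  qed auto
  also have "\<dots> = (\<Prod>e\<in>Or. det (1\<^sub>m (r (snd e)) - u e * u (prod.swap e)))"
    using Or by (intro prod.cong refl det_on_rev_pair) auto
  finally show ?thesis .
qed

end

theorem corollary1:
  fixes V :: "'v set" and E :: "('v \<times> 'v) set" and r :: "'v \<Rightarrow> nat"
    and u :: "'v \<times> 'v \<Rightarrow> complex mat" and Or :: "('v \<times> 'v) set"
  assumes "finite V"
    and "E \<subseteq> V \<times> V"
    and "\<And>i j. (i, j) \<in> E \<Longrightarrow> (j, i) \<in> E"
    and "\<And>i. (i, i) \<notin> E"
    and "\<And>i. i \<in> V \<Longrightarrow> r i > 0"
    and "\<And>e. e \<in> E \<Longrightarrow> u e \<in> carrier_mat (r (snd e)) (r (fst e))"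
    and "\<And>e. e \<in> E \<Longrightarrow> invertible_mat (1\<^sub>m (r (snd e)) - u e * u (prod.swap e))"
    and "Or \<subseteq> E"
    and "\<And>e. e \<in> E \<Longrightarrow> (e \<in> Or \<longleftrightarrow> prod.swap e \<notin> Or)"
  shows "zeta_inv E r u =
     det_on (vertex_index V r) (\<lambda>x y. (if x = y then 1 else 0) + hatD E r u x y - hatA E r u x y)
     * (\<Prod>e\<in>Or. det (1\<^sub>m (r (snd e)) - u e * u (prod.swap e)))"
proof -
  interpret matrix_weighted_graph V E r u
    using assms by unfold_locales auto
  have "zeta_inv E r u = det_on EI (\<lambda>x y. ((if x = y then 1 else 0) + rev_op u x y)
      - (\<Sum>z\<in>VI. origin_op u x z * terminus_op z y))"
    unfolding zeta_inv_def by (rule det_on_cong) (rule one_minus_edge_op_eq)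
  also have "\<dots> = det_on EI (\<lambda>x y. (if x = y then 1 else 0) + rev_op u x y)
      * det_on VI (\<lambda>x y. (if x = y then 1 else 0)
          - (\<Sum>z\<in>EI. terminus_op x z * (\<Sum>w\<in>EI. rev_resolvent r u z w * origin_op u w y)))"
    by (rule det_on_schur_complement[OF finite_EI finite_VI rev_resolvent_left_inverse])
  also have "det_on VI (\<lambda>x y. (if x = y then 1 else 0)
      - (\<Sum>z\<in>EI. terminus_op x z * (\<Sum>w\<in>EI. rev_resolvent r u z w * origin_op u w y)))
    = det_on VI (\<lambda>x y. (if x = y then 1 else 0) + hatD E r u x y - hatA E r u x y)"
    by (rule det_on_cong) (simp add: terminus_resolvent_origin)
  also have "det_on EI (\<lambda>x y. (if x = y then 1 else 0) + rev_op u x y)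
    = (\<Prod>e\<in>Or. det (1\<^sub>m (r (snd e)) - u e * u (prod.swap e)))"
    using assms(8,9) by (rule det_one_plus_rev_op)
  finally show ?thesis
    by (simp only: mult.commute)
qed

end
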